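(* Let $I$ be a modal intuitionistic formula, $\varphi(x)=ST_{22}(I,x)$ and $k=r(\varphi)$. Let $\Theta\supseteq\Sigma_\varphi$, let $(M_1,t),(M_2,u)$ be pointed $\Theta$-models, let $l\in\mathbb{N}$, and let $(A,B)$ be a $(2,2)$-modal $\langle(M_1,t),(M_2,u)\rangle_l$-asimulation. Then for all $i,j\in\{1,2\}$, all $m$, all $(\bar a_m,a)\in U_i^{m+1}$ and $(\bar b_m,b)\in U_j^{m+1}$: if $(\bar a_m,a)\,A\,(\bar b_m,b)$, $m+k\le l$ and $a\models_i\varphi(x)$, then $b\models_j\varphi(x)$.
   Context: Correspondence language: classical first-order logic without identity over $\Sigma=\{R,R_\Box,R_\Diamond,P_1,P_2,\dots\}$ ($R,R_\Box,R_\Diamond$ binary, $P_n$ unary). $\Theta$ is a subset of $\Sigma$ containing $R,R_\Box,R_\Diamond$; $\Theta$-models $M_k=\langle U_k,\iota_k\rangle$, with $R_k=\iota_k(R)$, $R_{\Box k}=\iota_k(R_\Box)$, $R_{\Diamond k}=\iota_k(R_\Diamond)$. $\Sigma_\varphi=\{R,R_\Box,R_\Diamond\}\cup\{P_n:P_n\text{ occurs in }\varphi\}$. $a\models_k\varphi(x)$ means $\varphi$ holds in $M_k$ under assignments sending $x$ to $a$. $r(\varphi)$ is the quantifier depth: $r$ of atoms and $\bot$ is $0$, $r(\varphi\circ\psi)=\max(r(\varphi),r(\psi))$ for binary connectives, $r(Qx\varphi)=r(\varphi)+1$. $s\overset{\leftrightarrow}{A}t$ means $sAt$ and $tAs$.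 Modal intuitionistic formulas: built from $p_n,\bot$ with $\wedge,\vee,\to,\Box,\Diamond$. $ST_{22}$: $ST_{22}(p_n,x)=P_n(x)$, $ST_{22}(\bot,x)=\bot$, commutes with $\wedge,\vee$; $ST_{22}(I\to J,x)=\forall y(R(x,y)\to(ST_{22}(I,y)\to ST_{22}(J,y)))$; $ST_{22}(\Box I,x)=\forall y(R(x,y)\to\forall z(R_\Box(y,z)\to ST_{22}(I,z)))$; $ST_{22}(\Diamond I,x)=\forall y(R(x,y)\to\exists z(R_\Diamond(y,z)\wedge ST_{22}(I,z)))$. A $(2,2)$-modal $\langle(M_1,t),(M_2,u)\rangle_l$-asimulation is a pair $(A,B)$ of relations on finite nonempty tuples such that, for all $i,j\in\{1,2\}$, $m$, $\bar a_m,a,c,e\in U_i$, $\bar b_m,b,d,f\in U_j$, unary $P\in\Theta$: $A,B\subseteq\bigcup_{n>0}((U_1^n\times U_2^n)\cup(U_2^n\times U_1^n))$; $tAu$; if $(\bar a_m,a)A(\bar b_m,b)$ and $a\models_iP(x)$ then $b\models_jP(x)$; if $(\bar a_m,a)A(\bar b_m,b)$, $bR_jd$, $m<l$ then some $c\in U_i$ has $aR_ic$ and $(\bar a_m,a,c)\overset{\leftrightarrow}{A}(\bar b_m,b,d)$; if $(\bar a_m,a)A(\bar b_m,b)$, $bR_jd$, $dR_{\Box j}f$, $m+1<l$ then some $c,e\in U_i$ have $aR_ic$, $cR_{\Box i}e$, $(\bar a_m,a,c,e)A(\bar b_m,b,d,f)$; if $(\bar a_m,a)A(\bar b_m,b)$,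 $bR_jd$, $m+1<l$ then some $c\in U_i$ has $aR_ic$ and $(\bar a_m,a,c)B(\bar b_m,b,d)$; if $(\bar a_m,a)B(\bar b_m,b)$, $aR_{\Diamond i}c$, $m<l$ then some $d\in U_j$ has $bR_{\Diamond j}d$ and $(\bar a_m,a,c)A(\bar b_m,b,d)$. *)

theory Defs
  imports Main
begin

datatype mi_form =
    MVar nat
  | MBot
  | MAnd mi_form mi_form
  | MOr mi_form mi_form
  | MImp mi_form mi_form
  | MBox mi_form
  | MDia mi_form

datatype fo_form =
    FR nat nat
  | FRBox nat nat
  | FRDia nat nat
  | FP nat nat
  | FBot
  | FAnd fo_form fo_form
  | FOr fo_form fo_form
  | FImp fo_form fo_form
  | FAll nat fo_form
  | FEx nat fo_form

fun qdepth :: "fo_form \<Rightarrow> nat" where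
  "qdepth (FR _ _) = 0"
| "qdepth (FRBox _ _) = 0"
| "qdepth (FRDia _ _) = 0"
| "qdepth (FP _ _) = 0"
| "qdepth FBot = 0"
| "qdepth (FAnd f g) = max (qdepth f) (qdepth g)"
| "qdepth (FOr f g) = max (qdepth f) (qdepth g)"
| "qdepth (FImp f g) = max (qdepth f) (qdepth g)"
| "qdepth (FAll _ f) = Suc (qdepth f)"
| "qdepth (FEx _ f) = Suc (qdepth f)"

text \<open>Indices n of the unary predicates P_n occurring in a formula
  (Sigma_phi is {R,R_Box,R_Dia} together with these).\<close>
fun preds :: "fo_form \<Rightarrow> nat set" where
  "preds (FP n _) = {n}"
| "preds (FAnd f g) = preds f \<union> preds g"
| "preds (FOr f g) = preds f \<union> preds g"
| "preds (FImp f g) = preds f \<union> preds g"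
| "preds (FAll _ f) = preds f"
| "preds (FEx _ f) = preds f"
| "preds _ = {}"

text \<open>Standard translation ST_22(I, x). The fresh variables y, z are taken
  to be x+1 and x+2 (the subformulas ST_22(I,y) have only y free).\<close>
fun ST22 :: "mi_form \<Rightarrow> nat \<Rightarrow> fo_form" where
  "ST22 (MVar n) x = FP n x"
| "ST22 MBot x = FBot"
| "ST22 (MAnd I J) x = FAnd (ST22 I x) (ST22 J x)"
| "ST22 (MOr I J) x = FOr (ST22 I x) (ST22 J x)"
| "ST22 (MImp I J) x =
     FAll (x+1) (FImp (FR x (x+1)) (FImp (ST22 I (x+1)) (ST22 J (x+1))))"
| "ST22 (MBox I) x =
     FAll (x+1) (FImp (FR x (x+1)) (FAll (x+2) (FImp (FRBox (x+1) (x+2)) (ST22 I (x+2)))))"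
| "ST22 (MDia I) x =
     FAll (x+1) (FImp (FR x (x+1)) (FEx (x+2) (FAnd (FRDia (x+1) (x+2)) (ST22 I (x+2)))))"

text \<open>A Theta-model; Theta is given by the set of indices n of the unary
  predicates P_n it contains (R, R_Box, R_Dia always belong to Theta).
  The interpretation of P_n for n outside Theta is irrelevant.\<close>
record 'u model =
  univ :: "'u set"
  Rel  :: "'u \<Rightarrow> 'u \<Rightarrow> bool"
  RBox :: "'u \<Rightarrow> 'u \<Rightarrow> bool"
  RDia :: "'u \<Rightarrow> 'u \<Rightarrow> bool"
  Pred :: "nat \<Rightarrow> 'u \<Rightarrow> bool"

definition is_model :: "nat set \<Rightarrow> 'u model \<Rightarrow> bool" where
  "is_model Theta M \<longleftrightarrow> univ M \<noteq> {}
     \<and> (\<forall>a b. Rel M a b \<longrightarrow> a \<in> univ M \<and> b \<in> univ M)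
     \<and> (\<forall>a b. RBox M a b \<longrightarrow> a \<in> univ M \<and> b \<in> univ M)
     \<and> (\<forall>a b. RDia M a b \<longrightarrow> a \<in> univ M \<and> b \<in> univ M)
     \<and> (\<forall>n\<in>Theta. \<forall>a. Pred M n a \<longrightarrow> a \<in> univ M)"

fun eval :: "'u model \<Rightarrow> (nat \<Rightarrow> 'u) \<Rightarrow> fo_form \<Rightarrow> bool" where
  "eval M g (FR v w) = Rel M (g v) (g w)"
| "eval M g (FRBox v w) = RBox M (g v) (g w)"
| "eval M g (FRDia v w) = RDia M (g v) (g w)"
| "eval M g (FP n v) = Pred M n (g v)"
| "eval M g FBot = False"
| "eval M g (FAnd f h) = (eval M g f \<and> eval M g h)"
| "eval M g (FOr f h) = (eval M g f \<or> eval M g h)"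
| "eval M g (FImp f h) = (eval M g f \<longrightarrow> eval M g h)"
| "eval M g (FAll v f) = (\<forall>a\<in>univ M. eval M (g(v := a)) f)"
| "eval M g (FEx v f) = (\<exists>a\<in>univ M. eval M (g(v := a)) f)"

definition sat_at :: "'u model \<Rightarrow> 'u \<Rightarrow> fo_form \<Rightarrow> nat \<Rightarrow> bool" where
  "sat_at M a phi x \<longleftrightarrow>
     (\<forall>g. (\<forall>v. g v \<in> univ M) \<longrightarrow> g x = a \<longrightarrow> eval M g phi)"

text \<open>Tuples are nonempty lists; (a_1..a_m, a) is the list as @ [a].\<close>

definition pick :: "'u model \<Rightarrow> 'u model \<Rightarrow> nat \<Rightarrow> 'u model" where
  "pick M1 M2 i = (if i = 1 then M1 else M2)"

definition tuple_in :: "'u model \<Rightarrow> nat \<Rightarrow> 'u list \<Rightarrow> 'u \<Rightarrow> bool" where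
  "tuple_in M m as a \<longleftrightarrow> length as = m \<and> set as \<subseteq> univ M \<and> a \<in> univ M"

definition tuple_rel_ok :: "'u model \<Rightarrow> 'u model \<Rightarrow> ('u list \<Rightarrow> 'u list \<Rightarrow> bool) \<Rightarrow> bool" where
  "tuple_rel_ok M1 M2 A \<longleftrightarrow> (\<forall>xs ys. A xs ys \<longrightarrow>
      length xs = length ys \<and> 0 < length xs \<and>
      ((set xs \<subseteq> univ M1 \<and> set ys \<subseteq> univ M2) \<or> (set xs \<subseteq> univ M2 \<and> set ys \<subseteq> univ M1)))"

definition asim22 ::
  "nat set \<Rightarrow> 'u model \<Rightarrow> 'u \<Rightarrow> 'u model \<Rightarrow> 'u \<Rightarrow> nat \<Rightarrow>
   ('u list \<Rightarrow> 'u list \<Rightarrow> bool) \<Rightarrow> ('u list \<Rightarrow> 'u list \<Rightarrow> bool) \<Rightarrow> bool" where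
  "asim22 Theta M1 t M2 u l A B \<longleftrightarrow>
     tuple_rel_ok M1 M2 A \<and> tuple_rel_ok M1 M2 B \<and> A [t] [u] \<and>
     (\<forall>i\<in>{1,2}. \<forall>j\<in>{1,2}. let Mi = pick M1 M2 i; Mj = pick M1 M2 j in
       \<forall>m as a bs b. tuple_in Mi m as a \<longrightarrow> tuple_in Mj m bs b \<longrightarrow>
        (A (as @ [a]) (bs @ [b]) \<longrightarrow>
           (\<forall>n\<in>Theta. Pred Mi n a \<longrightarrow> Pred Mj n b)) \<and>
        (A (as @ [a]) (bs @ [b]) \<longrightarrow> (\<forall>d\<in>univ Mj. Rel Mj b d \<longrightarrow> m < l \<longrightarrow>
           (\<exists>c\<in>univ Mi. Rel Mi a c \<and> A (as @ [a, c]) (bs @ [b, d])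
                                       \<and> A (bs @ [b, d]) (as @ [a, c])))) \<and>
        (A (as @ [a]) (bs @ [b]) \<longrightarrow> (\<forall>d\<in>univ Mj. \<forall>f\<in>univ Mj.
           Rel Mj b d \<longrightarrow> RBox Mj d f \<longrightarrow> m + 1 < l \<longrightarrow>
           (\<exists>c\<in>univ Mi. \<exists>e\<in>univ Mi. Rel Mi a c \<and> RBox Mi c e \<and>
                A (as @ [a, c, e]) (bs @ [b, d, f])))) \<and>
        (A (as @ [a]) (bs @ [b]) \<longrightarrow> (\<forall>d\<in>univ Mj. Rel Mj b d \<longrightarrow> m + 1 < l \<longrightarrow>
           (\<exists>c\<in>univ Mi. Rel Mi a c \<and> B (as @ [a, c]) (bs @ [b, d])))) \<and>
        (B (as @ [a]) (bs @ [b]) \<longrightarrow> (\<forall>c\<in>univ Mi. RDia Mi a c \<longrightarrow> m < l \<longrightarrow>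
           (\<exists>d\<in>univ Mj. RDia Mj b d \<and> A (as @ [a, c]) (bs @ [b, d])))))"

end

theory Submission
  imports Defs
begin

text \<open>ST22 is the first-order reading of a Kripke semantics, so it suffices to show that (A, B)
  preserves that semantics, by induction on I while tracking the tuple length m. An implication
  uses the two-way A-clause (the antecedent is pulled back along A, the consequent pushed forth),
  a box the clause for an R-step followed by an R_Box-step, and a diamond passes through B and
  back into A. An R-step costs one unit of the budget l and a modality two, which is exactly the
  quantifier depth of the translation.\<close>

fun msem :: "'u model \<Rightarrow> mi_form \<Rightarrow> 'u \<Rightarrow> bool" where
  "msem M (MVar n) a = Pred M n a"
| "msem M MBot a = False"
| "msem M (MAnd I J) a = (msem M I a \<and> msem M J a)"
| "msem M (MOr I J) a = (msem M I a \<or> msem M J a)"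
| "msem M (MImp I J) a = (\<forall>d\<in>univ M. Rel M a d \<longrightarrow> msem M I d \<longrightarrow> msem M J d)"
| "msem M (MBox I) a = (\<forall>d\<in>univ M. Rel M a d \<longrightarrow> (\<forall>f\<in>univ M. RBox M d f \<longrightarrow> msem M I f))"
| "msem M (MDia I) a = (\<forall>d\<in>univ M. Rel M a d \<longrightarrow> (\<exists>f\<in>univ M. RDia M d f \<and> msem M I f))"

fun mdepth :: "mi_form \<Rightarrow> nat" where
  "mdepth (MVar _) = 0"
| "mdepth MBot = 0"
| "mdepth (MAnd I J) = max (mdepth I) (mdepth J)"
| "mdepth (MOr I J) = max (mdepth I) (mdepth J)"
| "mdepth (MImp I J) = Suc (max (mdepth I) (mdepth J))"
| "mdepth (MBox I) = Suc (Suc (mdepth I))"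
| "mdepth (MDia I) = Suc (Suc (mdepth I))"

fun props :: "mi_form \<Rightarrow> nat set" where
  "props (MVar n) = {n}"
| "props MBot = {}"
| "props (MAnd I J) = props I \<union> props J"
| "props (MOr I J) = props I \<union> props J"
| "props (MImp I J) = props I \<union> props J"
| "props (MBox I) = props I"
| "props (MDia I) = props I"

lemma qdepth_ST22: "qdepth (ST22 I x) = mdepth I"
  by (induction I arbitrary: x) auto

lemma preds_ST22: "preds (ST22 I x) = props I"
  by (induction I arbitrary: x) auto

lemma eval_ST22: "eval M g (ST22 I x) = msem M I (g x)"
  by (induction I arbitrary: g x) auto

lemma sat_at_ST22:
  assumes "a \<in> univ M"
  shows "sat_at M a (ST22 I x) x \<longleftrightarrow> msem M I a"
proof
  assume "sat_at M a (ST22 I x) x"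
  then show "msem M I a"
    using assms by (auto simp: sat_at_def eval_ST22 dest: spec[of _ "\<lambda>_. a"])
qed (auto simp: sat_at_def eval_ST22)

lemma tuple_in_snoc: "tuple_in M m as a \<Longrightarrow> c \<in> univ M \<Longrightarrow> tuple_in M (Suc m) (as @ [a]) c"
  by (auto simp: tuple_in_def)

lemma tuple_in_last: "tuple_in M m as a \<Longrightarrow> a \<in> univ M"
  by (simp add: tuple_in_def)

lemma pick_cases: "N \<in> {M1, M2} \<Longrightarrow> \<exists>i\<in>{1, 2}. N = pick M1 M2 i"
  unfolding pick_def by (auto intro: bexI[of _ 2])

lemma pick_mem: "pick M1 M2 i \<in> {M1, M2}"
  by (simp add: pick_def)

context
  fixes Theta M1 t M2 u l A B
  assumes asim: "asim22 Theta M1 t M2 u l A B"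
begin

lemma asim22_clauses:
  assumes "N \<in> {M1, M2}" "N' \<in> {M1, M2}" "tuple_in N m as a" "tuple_in N' m bs b"
  shows "(A (as @ [a]) (bs @ [b]) \<longrightarrow> (\<forall>n\<in>Theta. Pred N n a \<longrightarrow> Pred N' n b)) \<and>
    (A (as @ [a]) (bs @ [b]) \<longrightarrow> (\<forall>d\<in>univ N'. Rel N' b d \<longrightarrow> m < l \<longrightarrow>
       (\<exists>c\<in>univ N. Rel N a c \<and> A (as @ [a, c]) (bs @ [b, d]) \<and> A (bs @ [b, d]) (as @ [a, c])))) \<and>
    (A (as @ [a]) (bs @ [b]) \<longrightarrow> (\<forall>d\<in>univ N'. \<forall>f\<in>univ N'.
       Rel N' b d \<longrightarrow> RBox N' d f \<longrightarrow> m + 1 < l \<longrightarrow>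
       (\<exists>c\<in>univ N. \<exists>e\<in>univ N. Rel N a c \<and> RBox N c e \<and> A (as @ [a, c, e]) (bs @ [b, d, f])))) \<and>
    (A (as @ [a]) (bs @ [b]) \<longrightarrow> (\<forall>d\<in>univ N'. Rel N' b d \<longrightarrow> m + 1 < l \<longrightarrow>
       (\<exists>c\<in>univ N. Rel N a c \<and> B (as @ [a, c]) (bs @ [b, d])))) \<and>
    (B (as @ [a]) (bs @ [b]) \<longrightarrow> (\<forall>c\<in>univ N. RDia N a c \<longrightarrow> m < l \<longrightarrow>
       (\<exists>d\<in>univ N'. RDia N' b d \<and> A (as @ [a, c]) (bs @ [b, d]))))"
proof -
  obtain i j where "i \<in> {1, 2}" "j \<in> {1, 2}" "N = pick M1 M2 i" "N' = pick M1 M2 j"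
    using pick_cases[OF assms(1)] pick_cases[OF assms(2)] by blast
  then show ?thesis
    using asim assms(3,4) unfolding asim22_def Let_def by blast
qed

lemma asim22_pred:
  assumes "N \<in> {M1, M2}" "N' \<in> {M1, M2}" "tuple_in N m as a" "tuple_in N' m bs b"
    and "A (as @ [a]) (bs @ [b])" "n \<in> Theta" "Pred N n a"
  shows "Pred N' n b"
  using asim22_clauses[OF assms(1-4)] assms(5-) by blast

lemma asim22_forth_back:
  assumes "N \<in> {M1, M2}" "N' \<in> {M1, M2}" "tuple_in N m as a" "tuple_in N' m bs b"
    and "A (as @ [a]) (bs @ [b])" "d \<in> univ N'" "Rel N' b d" "m < l"
  shows "\<exists>c\<in>univ N. Rel N a c \<and> A (as @ [a, c]) (bs @ [b, d]) \<and> A (bs @ [b, d]) (as @ [a, c])"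
  using asim22_clauses[OF assms(1-4)] assms(5-) by blast

lemma asim22_forth_box:
  assumes "N \<in> {M1, M2}" "N' \<in> {M1, M2}" "tuple_in N m as a" "tuple_in N' m bs b"
    and "A (as @ [a]) (bs @ [b])" "d \<in> univ N'" "f \<in> univ N'" "Rel N' b d" "RBox N' d f"
    and "m + 1 < l"
  shows "\<exists>c\<in>univ N. \<exists>e\<in>univ N. Rel N a c \<and> RBox N c e \<and> A (as @ [a, c, e]) (bs @ [b, d, f])"
  using asim22_clauses[OF assms(1-4)] assms(5-) by blast

lemma asim22_forth_B:
  assumes "N \<in> {M1, M2}" "N' \<in> {M1, M2}" "tuple_in N m as a" "tuple_in N' m bs b"
    and "A (as @ [a]) (bs @ [b])" "d \<in> univ N'" "Rel N' b d" "m + 1 < l"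
  shows "\<exists>c\<in>univ N. Rel N a c \<and> B (as @ [a, c]) (bs @ [b, d])"
  using asim22_clauses[OF assms(1-4)] assms(5-) by blast

lemma asim22_B_dia:
  assumes "N \<in> {M1, M2}" "N' \<in> {M1, M2}" "tuple_in N m as a" "tuple_in N' m bs b"
    and "B (as @ [a]) (bs @ [b])" "c \<in> univ N" "RDia N a c" "m < l"
  shows "\<exists>d\<in>univ N'. RDia N' b d \<and> A (as @ [a, c]) (bs @ [b, d])"
  using asim22_clauses[OF assms(1-4)] assms(5-) by blast

lemma asim22_preserves_msem:
  assumes "props I \<subseteq> Theta" "N \<in> {M1, M2}" "N' \<in> {M1, M2}"
    and "tuple_in N m as a" "tuple_in N' m bs b" "A (as @ [a]) (bs @ [b])"
    and "m + mdepth I \<le> l" "msem N I a"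
  shows "msem N' I b"
  using assms
proof (induction I arbitrary: N N' m as a bs b)
  case (MVar n)
  then show ?case using asim22_pred by simp
next
  case MBot
  then show ?case by simp
next
  case (MAnd I J)
  show ?case using MAnd.IH[OF _ MAnd.prems(2-6)] MAnd.prems(1,7,8) by simp
next
  case (MOr I J)
  show ?case using MOr.IH[OF _ MOr.prems(2-6)] MOr.prems(1,7,8) by (auto simp: max_def split: if_splits)
next
  case (MImp I J)
  show ?case unfolding msem.simps
  proof (intro ballI impI)
    fix d assume d: "d \<in> univ N'" "Rel N' b d" and dI: "msem N' I d"
    obtain c where c: "c \<in> univ N" "Rel N a c"
      and fwd: "A (as @ [a, c]) (bs @ [b, d])" and bwd: "A (bs @ [b, d]) (as @ [a, c])"
      using asim22_forth_back[OF MImp.prems(2-6) d] MImp.prems(7) by auto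
    have ac: "tuple_in N (Suc m) (as @ [a]) c"
      using tuple_in_snoc[OF MImp.prems(4) c(1)] .
    have bd: "tuple_in N' (Suc m) (bs @ [b]) d"
      using tuple_in_snoc[OF MImp.prems(5) d(1)] .
    have "msem N I c"
      using MImp.IH(1)[OF _ MImp.prems(3,2) bd ac _ _ dI] bwd MImp.prems(1,7) by auto
    then have "msem N J c"
      using MImp.prems(8) c by auto
    then show "msem N' J d"
      using MImp.IH(2)[OF _ MImp.prems(2,3) ac bd] fwd MImp.prems(1,7) by auto
  qed
next
  case (MBox I)
  show ?case unfolding msem.simps
  proof (intro ballI impI)
    fix d f assume d: "d \<in> univ N'" "Rel N' b d" and f: "f \<in> univ N'" "RBox N' d f"
    obtain c e where c: "c \<in> univ N" "Rel N a c" and e: "e \<in> univ N" "RBox N c e"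
      and forth: "A (as @ [a, c, e]) (bs @ [b, d, f])"
      using asim22_forth_box[OF MBox.prems(2-6) d(1) f(1) d(2) f(2)] MBox.prems(7) by auto
    have ace: "tuple_in N (Suc (Suc m)) (as @ [a, c]) e"
      using tuple_in_snoc[OF tuple_in_snoc[OF MBox.prems(4) c(1)] e(1)] by simp
    have bdf: "tuple_in N' (Suc (Suc m)) (bs @ [b, d]) f"
      using tuple_in_snoc[OF tuple_in_snoc[OF MBox.prems(5) d(1)] f(1)] by simp
    have "msem N I e"
      using MBox.prems(8) c e by auto
    then show "msem N' I f"
      using MBox.IH[OF _ MBox.prems(2,3) ace bdf] forth MBox.prems(1,7) by auto
  qed
next
  case (MDia I)
  show ?case unfolding msem.simps
  proof (intro ballI impI)
    fix d assume d: "d \<in> univ N'" "Rel N' b d"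
    obtain c where c: "c \<in> univ N" "Rel N a c" and cd: "B (as @ [a, c]) (bs @ [b, d])"
      using asim22_forth_B[OF MDia.prems(2-6) d] MDia.prems(7) by auto
    obtain e where e: "e \<in> univ N" "RDia N c e" and eI: "msem N I e"
      using MDia.prems(8) c by auto
    have ac: "tuple_in N (Suc m) (as @ [a]) c"
      using tuple_in_snoc[OF MDia.prems(4) c(1)] .
    have bd: "tuple_in N' (Suc m) (bs @ [b]) d"
      using tuple_in_snoc[OF MDia.prems(5) d(1)] .
    obtain f where f: "f \<in> univ N'" "RDia N' d f" and forth: "A (as @ [a, c, e]) (bs @ [b, d, f])"
      using asim22_B_dia[OF MDia.prems(2,3) ac bd _ e] cd MDia.prems(7) by auto
    have ace: "tuple_in N (Suc (Suc m)) (as @ [a, c]) e"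
      using tuple_in_snoc[OF ac e(1)] by simp
    have bdf: "tuple_in N' (Suc (Suc m)) (bs @ [b, d]) f"
      using tuple_in_snoc[OF bd f(1)] by simp
    have "msem N' I f"
      using MDia.IH[OF _ MDia.prems(2,3) ace bdf _ _ eI] forth MDia.prems(1,7) by auto
    then show "\<exists>f\<in>univ N'. RDia N' d f \<and> msem N' I f"
      using f by blast
  qed
qed

end

theorem mainTheorem3:
  fixes I :: mi_form and x :: nat and Theta :: "nat set"
    and M1 M2 :: "'u model" and t u :: 'u and l :: nat
    and A B :: "'u list \<Rightarrow> 'u list \<Rightarrow> bool"
  assumes "preds (ST22 I x) \<subseteq> Theta"
    and "is_model Theta M1" and "is_model Theta M2"
    and "t \<in> univ M1" and "u \<in> univ M2"
    and "asim22 Theta M1 t M2 u l A B"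
  shows "\<forall>i\<in>{1,2}. \<forall>j\<in>{1,2}. \<forall>m as a bs b.
           tuple_in (pick M1 M2 i) m as a \<longrightarrow> tuple_in (pick M1 M2 j) m bs b \<longrightarrow>
           A (as @ [a]) (bs @ [b]) \<longrightarrow> m + qdepth (ST22 I x) \<le> l \<longrightarrow>
           sat_at (pick M1 M2 i) a (ST22 I x) x \<longrightarrow>
           sat_at (pick M1 M2 j) b (ST22 I x) x"
proof (intro ballI allI impI)
  fix i j m as a bs b
  let ?N = "pick M1 M2 i" and ?N' = "pick M1 M2 j"
  assume "i \<in> {1, 2}" "j \<in> {1, 2}"
    and tuples: "tuple_in ?N m as a" "tuple_in ?N' m bs b" "A (as @ [a]) (bs @ [b])"
    and depth: "m + qdepth (ST22 I x) \<le> l" and sat: "sat_at ?N a (ST22 I x) x"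
  have "msem ?N' I b"
    using asim22_preserves_msem[OF assms(6) _ pick_mem pick_mem tuples] assms(1) depth sat
    by (simp add: preds_ST22 qdepth_ST22 sat_at_ST22 tuple_in_last[OF tuples(1)])
  then show "sat_at ?N' b (ST22 I x) x"
    by (simp add: sat_at_ST22 tuple_in_last[OF tuples(2)])
qed

end
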